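(* Let $a,b>0$, $I=[g(b),b]$, $J=[f(a),a]$, and let $g$ and $f$ be decreasing homeomorphisms of $I$ and $J$ onto their images $g(I)\subseteq I$ and $f(J)\subseteq J$ such that (1) $0$ is a repelling fixed point of $g$ and $\{x_L,x_R\}$ with $x_L<0<x_R$ is an attracting period-two orbit of $g$, $g(x_L)=x_R$, $g(x_R)=x_L$; moreover $b>x_R$; (2) $0$ is a repelling fixed point of $f$ and $\{\overline{x}_L,\overline{x}_R\}$ with $\overline{x}_L<0<\overline{x}_R$ is an attracting period-two orbit of $f$, $f(\overline{x}_L)=\overline{x}_R$, $f(\overline{x}_R)=\overline{x}_L$; moreover $a>\overline{x}_R$; (3) $g^2(x)<x$ for all $x\in(x_R,b]$; (4) $f^2(x)<x$ for all $x\in(\overline{x}_R,a]$. Then there exists a (not necessarily unique) homeomorphism $h:[f(a),\overline{x}_L]\cup[\overline{x}_R,a]\to[g(b),x_L]\cup[x_R,b]$ such that $g(h(x))=h(f(x))$ for all $x\in[f(a),\overline{x}_L]\cup[\overline{x}_R,a]$.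
   Context: A fixed point $p$ of a homeomorphism $\phi$ is attracting if there is a neighbourhood $U$ of $p$ with $\phi^n(x)\to p$ for all $x\in U$, and repelling if it is attracting for $\phi^{-1}$. A period-two orbit $\{p,q\}$ of $\phi$ is attracting if $p$ and $q$ are attracting fixed points of $\phi^2=\phi\circ\phi$. *)

theory Defs
  imports "HOL-Analysis.Analysis"
begin

definition decr_self_homeo :: "real set \<Rightarrow> (real \<Rightarrow> real) \<Rightarrow> bool" where
  "decr_self_homeo S \<phi> \<longleftrightarrow>
     (\<exists>\<psi>. homeomorphism S (\<phi> ` S) \<phi> \<psi>) \<and> \<phi> ` S \<subseteq> S \<and>
     (\<forall>x\<in>S. \<forall>y\<in>S. x < y \<longrightarrow> \<phi> y < \<phi> x)"

definition attracting_fp :: "real set \<Rightarrow> (real \<Rightarrow> real) \<Rightarrow> real \<Rightarrow> bool" where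
  "attracting_fp S \<phi> p \<longleftrightarrow> p \<in> S \<and> \<phi> p = p \<and>
     (\<exists>U. open U \<and> p \<in> U \<and> (\<forall>x\<in>U \<inter> S. (\<lambda>n. (\<phi> ^^ n) x) \<longlonglongrightarrow> p))"

text \<open>p is a repelling fixed point of \<phi> on S: attracting for \<phi>\<inverse>, i.e. there is a
  neighbourhood U of p such that for every x in U the backward orbit
  x, \<phi>\<inverse>(x), \<phi>\<inverse>\<inverse>(x), ... is defined (stays in S) and tends to p.\<close>
definition repelling_fp :: "real set \<Rightarrow> (real \<Rightarrow> real) \<Rightarrow> real \<Rightarrow> bool" where
  "repelling_fp S \<phi> p \<longleftrightarrow> p \<in> S \<and> \<phi> p = p \<and>
     (\<exists>U. open U \<and> p \<in> U \<and>
        (\<forall>x\<in>U. \<exists>s. s 0 = x \<and> (\<forall>n. s (Suc n) \<in> S \<and> \<phi> (s (Suc n)) = s n) \<and>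
                   s \<longlonglongrightarrow> p))"

definition attracting_2orbit :: "real set \<Rightarrow> (real \<Rightarrow> real) \<Rightarrow> real \<Rightarrow> real \<Rightarrow> bool" where
  "attracting_2orbit S \<phi> p q \<longleftrightarrow> attracting_fp S (\<phi> \<circ> \<phi>) p \<and> attracting_fp S (\<phi> \<circ> \<phi>) q"

end

theory Submission
  imports Defs
begin

(* On the outer pieces [yR, a] and [xR, b] the squares f o f and g o g are increasing
   homeomorphisms that fix the left endpoint and push every other point towards it. Any two
   such maps F of [p, q] are conjugate: (F q, q] is a fundamental domain, so an affine
   bijection between the fundamental domains of the two maps extends along orbits to a
   conjugacy, which is continuous because it is monotone and onto. Since f maps the outer
   piece homeomorphically onto the inner one, a conjugacy h1 of the squares extends to the
   inner piece as g o h1 o f^-1. The repelling fixed point 0 plays no role. *)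

lemma mono_on_onto_Icc_endpoints:
  fixes h :: "'a::linorder \<Rightarrow> 'b::linorder"
  assumes mono: "mono_on {c..d} h" and onto: "h ` {c..d} = {c'..d'}" and "c \<le> d"
  shows "h c = c'" "h d = d'"
proof -
  have hc: "h c \<in> {c'..d'}" and hd: "h d \<in> {c'..d'}"
    using onto \<open>c \<le> d\<close> by auto
  then have "c' \<in> h ` {c..d}" "d' \<in> h ` {c..d}"
    using onto by auto
  then obtain z z' where "z \<in> {c..d}" "h z = c'" "z' \<in> {c..d}" "h z' = d'"
    by (metis imageE)
  then show "h c = c'" "h d = d'"
    using monotone_onD[OF mono, of c z] monotone_onD[OF mono, of z' d] hc hd \<open>c \<le> d\<close> by auto
qed

lemma continuous_on_mono_onto_Icc:
  fixes h :: "real \<Rightarrow> real"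
  assumes mono: "mono_on {c..d} h" and onto: "h ` {c..d} = {c'..d'}"
  shows "continuous_on {c..d} h"
proof (cases "c \<le> d")
  case True
  note ends = mono_on_onto_Icc_endpoints[OF mono onto True]
  \<comment> \<open>Extend h to a monotone surjection of the line, which is continuous.\<close>
  define clamp where "clamp x = max c (min d x)" for x
  define H where "H x = h (clamp x) + (x - clamp x)" for x
  have clamp_in: "clamp x \<in> {c..d}" for x
    using True by (auto simp: clamp_def)
  have H_mono: "H x \<le> H y" if "x \<le> y" for x y
  proof -
    have "clamp x \<le> clamp y" "clamp y - clamp x \<le> y - x"
      using that by (auto simp: clamp_def)
    moreover have "h (clamp x) \<le> h (clamp y)"
      using monotone_onD[OF mono clamp_in clamp_in] \<open>clamp x \<le> clamp y\<close> .
    ultimately show ?thesis by (simp add: H_def)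
  qed
  have H_onto: "v \<in> range H" for v
  proof -
    consider "v < c'" | "d' < v" | "v \<in> h ` {c..d}"
      using onto by force
    then show ?thesis
    proof cases
      case 1
      then have "H (c + (v - c')) = v"
        using True ends by (simp add: H_def clamp_def)
      then show ?thesis by (metis rangeI)
    next
      case 2
      then have "H (d + (v - d')) = v"
        using True ends by (simp add: H_def clamp_def)
      then show ?thesis by (metis rangeI)
    next
      case 3
      then obtain x where "x \<in> {c..d}" "v = h x" by blast
      then have "H x = v" by (simp add: H_def clamp_def)
      then show ?thesis by (metis rangeI)
    qed
  qed
  then have "range H = UNIV"
    by blast
  then have "continuous_on UNIV H"
    using H_mono by (intro continuous_onI_mono) simp_all
  moreover have "H x = h x" if "x \<in> {c..d}" for x
    using that by (simp add: H_def clamp_def)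
  ultimately show ?thesis
    using continuous_on_subset continuous_on_cong by (metis subset_UNIV)
qed simp

lemma continuous_mono_on_image_Icc:
  fixes \<phi> :: "real \<Rightarrow> real"
  assumes "c \<le> d" "continuous_on {c..d} \<phi>" "mono_on {c..d} \<phi>"
  shows "\<phi> ` {c..d} = {\<phi> c..\<phi> d}"
proof
  show "\<phi> ` {c..d} \<subseteq> {\<phi> c..\<phi> d}"
    using monotone_onD[OF assms(3)] assms(1) by auto
  show "{\<phi> c..\<phi> d} \<subseteq> \<phi> ` {c..d}"
  proof
    fix v assume "v \<in> {\<phi> c..\<phi> d}"
    then obtain x where "c \<le> x" "x \<le> d" "\<phi> x = v"
      using IVT'[of \<phi> c v d] assms(1,2) by auto
    then show "v \<in> \<phi> ` {c..d}" by auto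
  qed
qed

lemma continuous_antimono_on_image_Icc:
  fixes \<phi> :: "real \<Rightarrow> real"
  assumes "c \<le> d" "continuous_on {c..d} \<phi>" "antimono_on {c..d} \<phi>"
  shows "\<phi> ` {c..d} = {\<phi> d..\<phi> c}"
proof
  show "\<phi> ` {c..d} \<subseteq> {\<phi> d..\<phi> c}"
    using monotone_onD[OF assms(3)] assms(1) by auto
  show "{\<phi> d..\<phi> c} \<subseteq> \<phi> ` {c..d}"
  proof
    fix v assume "v \<in> {\<phi> d..\<phi> c}"
    then obtain x where "c \<le> x" "x \<le> d" "\<phi> x = v"
      using IVT2'[of \<phi> d v c] assms(1,2) by auto
    then show "v \<in> \<phi> ` {c..d}" by auto
  qed
qed

lemma affine_order_iso_greaterThanAtMost:
  fixes a b c d :: real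
  assumes "a < b" "c < d"
  obtains \<phi> where "strict_mono_on {a<..b} \<phi>" "\<phi> ` {a<..b} = {c<..d}"
proof
  define r where "r = (d - c) / (b - a)"
  have r: "r > 0" "(b - a) * r = d - c"
    using assms by (simp_all add: r_def)
  show "strict_mono_on {a<..b} (\<lambda>x. c + (x - a) * r)"
    using r by (intro strict_mono_onI) simp
  have "c + (x - a) * r \<in> {c<..d}" if "x \<in> {a<..b}" for x
    using that r mult_right_mono[of "x - a" "b - a" r] by auto
  moreover have "v \<in> (\<lambda>x. c + (x - a) * r) ` {a<..b}" if "v \<in> {c<..d}" for v
  proof (rule image_eqI)
    show "v = c + (a + (v - c) / r - a) * r"
      using r by simp
    show "a + (v - c) / r \<in> {a<..b}"
      using that r by (auto simp: field_simps)
  qed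
  ultimately show "(\<lambda>x. c + (x - a) * r) ` {a<..b} = {c<..d}"
    by blast
qed

locale descending_orbits =
  fixes F :: "real \<Rightarrow> real" and p q :: real
  assumes p_less_q: "p < q"
    and continuous: "continuous_on {p..q} F"
    and strict_mono: "strict_mono_on {p..q} F"
    and fixed: "F p = p"
    and below_diagonal: "\<And>x. x \<in> {p<..q} \<Longrightarrow> F x < x"
begin

lemma maps_into: "x \<in> {p..q} \<Longrightarrow> F x \<in> {p..q}"
  using strict_mono_on_less_eq[OF strict_mono, of p x] below_diagonal[of x] fixed p_less_q
  by (cases "x = p") auto

lemma iter_maps_into: "x \<in> {p..q} \<Longrightarrow> (F ^^ n) x \<in> {p..q}"
  by (induction n) (simp_all only: funpow.simps id_apply comp_apply maps_into)

lemma iter_fixed: "(F ^^ n) p = p"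
  by (induction n) (simp_all add: fixed)

lemma iter_strict_mono: "strict_mono_on {p..q} (F ^^ n)"
proof (induction n)
  case (Suc n)
  have "(F ^^ n) ` {p..q} \<subseteq> {p..q}"
    using iter_maps_into by blast
  then show ?case
    using monotone_on_o[OF strict_mono Suc] by (simp add: comp_def)
qed (simp add: strict_mono_on_ident)

lemma iter_continuous: "continuous_on {p..q} (F ^^ n)"
proof (induction n)
  case (Suc n)
  have "(F ^^ n) ` {p..q} \<subseteq> {p..q}"
    using iter_maps_into by blast
  then show ?case
    using continuous_on_compose[OF Suc continuous_on_subset[OF continuous]] by simp
qed (simp add: continuous_on_id)

lemma iter_image: "(F ^^ n) ` {p..q} = {p..(F ^^ n) q}"
  using continuous_mono_on_image_Icc[OF _ iter_continuous strict_mono_on_imp_mono_on[OF iter_strict_mono]]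
    p_less_q iter_fixed by simp

lemma orbit_in_domain: "(F ^^ n) q \<in> {p<..q}"
  using strict_mono_onD[OF iter_strict_mono, of p q n] iter_fixed iter_maps_into[of q n] p_less_q
  by auto

lemma orbit_strict_decreasing: "m < n \<Longrightarrow> (F ^^ n) q < (F ^^ m) q"
proof (induction n)
  case (Suc n)
  have "(F ^^ Suc n) q < (F ^^ n) q"
    using below_diagonal[OF orbit_in_domain] by simp
  then show ?case
    using Suc by (cases "m = n") auto
qed simp

lemma orbit_antimono: "m \<le> n \<Longrightarrow> (F ^^ n) q \<le> (F ^^ m) q"
  using orbit_strict_decreasing[of m n] by (cases "m = n") auto

lemma orbit_tendsto: "(\<lambda>n. (F ^^ n) q) \<longlonglongrightarrow> p"
proof -
  have "decseq (\<lambda>n. (F ^^ n) q)"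
    using orbit_antimono by (simp add: decseq_def)
  then obtain L where L: "(\<lambda>n. (F ^^ n) q) \<longlonglongrightarrow> L" "\<forall>n. L \<le> (F ^^ n) q"
    using decseq_convergent[of _ p] orbit_in_domain by (metis greaterThanAtMost_iff less_imp_le)
  have L_in: "L \<in> {p..q}"
    using LIMSEQ_le_const[OF L(1), of p] orbit_in_domain L(2)[rule_format, of 0]
    by (auto intro: less_imp_le)
  have "(\<lambda>n. F ((F ^^ n) q)) \<longlonglongrightarrow> F L"
    using continuous_on_tendsto_compose[OF continuous L(1) L_in] iter_maps_into p_less_q by simp
  moreover have "(\<lambda>n. F ((F ^^ n) q)) \<longlonglongrightarrow> L"
    using LIMSEQ_Suc[OF L(1)] by simp
  ultimately have "F L = L"
    using LIMSEQ_unique by blast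
  then have "L = p"
    using below_diagonal[of L] L_in by fastforce
  with L show ?thesis by simp
qed

definition fundamental_domain :: "real set" where
  "fundamental_domain = {F q<..q}"

lemma fundamental_domain_subset: "fundamental_domain \<subseteq> {p..q}"
  using maps_into[of q] p_less_q by (auto simp: fundamental_domain_def)

lemma iter_fundamental_domain:
  assumes "y \<in> fundamental_domain"
  shows "(F ^^ n) y \<in> {(F ^^ Suc n) q<..(F ^^ n) q}"
proof -
  have "F q \<in> {p..q}" "y \<in> {p..q}" "F q < y" "y \<le> q"
    using assms maps_into[of q] fundamental_domain_subset p_less_q
    by (auto simp: fundamental_domain_def)
  then show ?thesis
    using strict_mono_on_less[OF iter_strict_mono] strict_mono_on_less_eq[OF iter_strict_mono] p_less_q
    by (auto simp: funpow_swap1)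
qed

lemma iter_fundamental_domain_in: "y \<in> fundamental_domain \<Longrightarrow> (F ^^ n) y \<in> {p<..q}"
  using iter_fundamental_domain[of y n] orbit_in_domain[of "Suc n"] orbit_in_domain[of n]
  by (auto simp del: funpow.simps)

lemma fundamental_domain_iter_onto:
  assumes "x \<in> {p<..q}"
  obtains n y where "y \<in> fundamental_domain" "(F ^^ n) y = x"
proof -
  obtain N where "(F ^^ N) q < x"
    using order_tendstoD(2)[OF orbit_tendsto, of x] assms by (auto dest: eventually_happens)
  then obtain n where n: "(F ^^ Suc n) q < x" "x \<le> (F ^^ n) q"
    using ex_least_nat_less[of "\<lambda>i. (F ^^ i) q < x" N] assms by (auto simp: not_less)
  then obtain y where y: "y \<in> {p..q}" "(F ^^ n) y = x"
    using iter_image[of n] assms by (metis atLeastAtMost_iff greaterThanAtMost_iff imageE less_imp_le)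
  have "F q < y"
  proof (rule ccontr)
    assume "\<not> F q < y"
    then have "(F ^^ n) y \<le> (F ^^ n) (F q)"
      using strict_mono_on_less_eq[OF iter_strict_mono y(1) maps_into[of q]] p_less_q by simp
    then show False
      using n y by (simp add: funpow_swap1)
  qed
  then show ?thesis
    using that y by (auto simp: fundamental_domain_def)
qed

lemma iter_fundamental_domain_less_iff:
  assumes "y \<in> fundamental_domain" "y' \<in> fundamental_domain"
  shows "(F ^^ n) y < (F ^^ m) y' \<longleftrightarrow> m < n \<or> m = n \<and> y < y'"
proof (cases m n rule: linorder_cases)
  case less
  then have "(F ^^ n) q \<le> (F ^^ Suc m) q"
    using orbit_antimono[of "Suc m" n] by simp
  then show ?thesis
    using less iter_fundamental_domain[OF assms(1), of n] iter_fundamental_domain[OF assms(2), of m]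
    by auto
next
  case equal
  then show ?thesis
    using strict_mono_on_less[OF iter_strict_mono] assms fundamental_domain_subset by blast
next
  case greater
  then have "(F ^^ m) q \<le> (F ^^ Suc n) q"
    using orbit_antimono[of "Suc n" m] by simp
  then show ?thesis
    using greater iter_fundamental_domain[OF assms(1), of n] iter_fundamental_domain[OF assms(2), of m]
    by auto
qed

lemma iter_fundamental_domain_eq_iff:
  assumes "y \<in> fundamental_domain" "y' \<in> fundamental_domain"
  shows "(F ^^ n) y = (F ^^ m) y' \<longleftrightarrow> n = m \<and> y = y'"
  using iter_fundamental_domain_less_iff[OF assms, of n m]
    iter_fundamental_domain_less_iff[OF assms(2,1), of m n]
  by (metis less_irrefl linorder_neqE)

\<comment> \<open>Only meaningful on {p<..q}.\<close>
definition orbit_coords :: "real \<Rightarrow> nat \<times> real" where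
  "orbit_coords x = (THE (n, y). y \<in> fundamental_domain \<and> (F ^^ n) y = x)"

lemma orbit_coords_iter:
  "y \<in> fundamental_domain \<Longrightarrow> orbit_coords ((F ^^ n) y) = (n, y)"
  unfolding orbit_coords_def
  by (rule the_equality) (auto simp: iter_fundamental_domain_eq_iff)

end

lemma descending_orbits_conjugate_strict_mono:
  assumes "descending_orbits F p q" and "descending_orbits G p' q'"
  obtains h where "strict_mono_on {p..q} h" "h ` {p..q} = {p'..q'}"
    "\<And>x. x \<in> {p..q} \<Longrightarrow> h (F x) = G (h x)"
proof -
  interpret F: descending_orbits F p q by fact
  interpret G: descending_orbits G p' q' by fact
  obtain h0 where h0: "strict_mono_on F.fundamental_domain h0"
    "h0 ` F.fundamental_domain = G.fundamental_domain"
    using affine_order_iso_greaterThanAtMost[of "F q" q "G q'" q'] F.p_less_q G.p_less_q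
      F.below_diagonal[of q] G.below_diagonal[of q']
    unfolding F.fundamental_domain_def G.fundamental_domain_def by auto
  define h where
    "h x = (if x \<le> p then p' else case F.orbit_coords x of (n, y) \<Rightarrow> (G ^^ n) (h0 y))" for x
  have h_p: "h p = p'"
    by (simp add: h_def)
  have h_iter: "h ((F ^^ n) y) = (G ^^ n) (h0 y)" if "y \<in> F.fundamental_domain" for n y
    using F.iter_fundamental_domain_in[OF that, of n] F.orbit_coords_iter[OF that]
    by (simp add: h_def)
  have h0_in: "h0 y \<in> G.fundamental_domain" if "y \<in> F.fundamental_domain" for y
    using h0(2) that by blast
  have coords: "\<exists>n y. y \<in> F.fundamental_domain \<and> x = (F ^^ n) y"
    if "x \<in> {p..q}" "x \<noteq> p" for x
    using F.fundamental_domain_iter_onto[of x] that by (metis atLeastAtMost_iff greaterThanAtMost_iff le_less)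
  have mono: "strict_mono_on {p..q} h"
  proof (rule strict_mono_onI)
    fix x x' assume x: "x \<in> {p..q}" and x': "x' \<in> {p..q}" and "x < x'"
    obtain m y' where y': "y' \<in> F.fundamental_domain" "x' = (F ^^ m) y'"
      using coords[OF x'] x \<open>x < x'\<close> by fastforce
    show "h x < h x'"
    proof (cases "x = p")
      case True
      then show ?thesis
        using h_p h_iter y' G.iter_fundamental_domain_in[OF h0_in] by auto
    next
      case False
      then obtain n y where y: "y \<in> F.fundamental_domain" "x = (F ^^ n) y"
        using coords[OF x False] by blast
      have "y < y' \<longleftrightarrow> h0 y < h0 y'"
        using strict_mono_on_less[OF h0(1) y(1) y'(1)] by simp
      then show ?thesis
        using \<open>x < x'\<close> y y' h_iter h0_in F.iter_fundamental_domain_less_iff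
          G.iter_fundamental_domain_less_iff by simp
    qed
  qed
  have onto: "h ` {p..q} = {p'..q'}"
  proof
    show "h ` {p..q} \<subseteq> {p'..q'}"
      using coords h_p h_iter G.iter_fundamental_domain_in[OF h0_in] G.p_less_q
      by (force simp: less_eq_real_def)
    show "{p'..q'} \<subseteq> h ` {p..q}"
    proof
      fix v assume v: "v \<in> {p'..q'}"
      show "v \<in> h ` {p..q}"
      proof (cases "v = p'")
        case False
        then obtain n w where "w \<in> G.fundamental_domain" "v = (G ^^ n) w"
          using G.fundamental_domain_iter_onto[of v] v by (metis atLeastAtMost_iff greaterThanAtMost_iff le_less)
        then obtain y where y: "y \<in> F.fundamental_domain" "v = h ((F ^^ n) y)"
          using h0(2) h_iter by (metis imageE)
        have "(F ^^ n) y \<in> {p..q}"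
          using F.iter_fundamental_domain_in[OF y(1), of n] by auto
        with y(2) show ?thesis
          by blast
      qed (use h_p F.p_less_q in force)
    qed
  qed
  have "h (F x) = G (h x)" if x: "x \<in> {p..q}" for x
  proof (cases "x = p")
    case False
    then obtain n y where "y \<in> F.fundamental_domain" "x = (F ^^ n) y"
      using coords[OF x False] by blast
    then show ?thesis
      using h_iter[of y "Suc n"] h_iter[of y n] by simp
  qed (simp add: h_p F.fixed G.fixed)
  with mono onto show thesis
    using that by blast
qed

lemma descending_orbits_conjugate:
  assumes "descending_orbits F p q" and "descending_orbits G p' q'"
  obtains h h' where "homeomorphism {p..q} {p'..q'} h h'"
    "\<And>x. x \<in> {p..q} \<Longrightarrow> h (F x) = G (h x)"
proof -
  obtain h where mono: "strict_mono_on {p..q} h" and onto: "h ` {p..q} = {p'..q'}"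
    and conj: "\<And>x. x \<in> {p..q} \<Longrightarrow> h (F x) = G (h x)"
    using descending_orbits_conjugate_strict_mono[OF assms] by blast
  have "continuous_on {p..q} h"
    using continuous_on_mono_onto_Icc[OF strict_mono_on_imp_mono_on[OF mono] onto] .
  then obtain h' where "homeomorphism {p..q} {p'..q'} h h'"
    using homeomorphism_compact[OF compact_Icc _ onto strict_mono_on_imp_inj_on[OF mono]] by blast
  with conj show thesis
    using that by blast
qed

lemma decr_self_homeoE:
  assumes "decr_self_homeo S \<phi>"
  obtains \<psi> where "homeomorphism S (\<phi> ` S) \<phi> \<psi>" "\<phi> ` S \<subseteq> S" "strict_antimono_on S \<phi>"
  using assms unfolding decr_self_homeo_def monotone_on_def by blast

lemma descending_orbits_square:
  fixes \<phi> :: "real \<Rightarrow> real"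
  assumes cont: "continuous_on S \<phi>" and into: "\<phi> ` S \<subseteq> S" and anti: "strict_antimono_on S \<phi>"
    and sub: "{c..d} \<subseteq> S" and "c < d" and "\<phi> (\<phi> c) = c"
    and below: "\<And>x. x \<in> {c<..d} \<Longrightarrow> \<phi> (\<phi> x) < x"
  shows "descending_orbits (\<lambda>x. \<phi> (\<phi> x)) c d"
proof
  show "continuous_on {c..d} (\<lambda>x. \<phi> (\<phi> x))"
    using continuous_on_compose2[OF cont continuous_on_subset[OF cont sub]] sub into by blast
  show "strict_mono_on {c..d} (\<lambda>x. \<phi> (\<phi> x))"
  proof (rule strict_mono_onI)
    fix r s assume "r \<in> {c..d}" "s \<in> {c..d}" "r < s"
    then have "r \<in> S" "s \<in> S"
      using sub by auto
    then have "\<phi> s < \<phi> r" "\<phi> r \<in> S" "\<phi> s \<in> S"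
      using monotone_onD[OF anti] \<open>r < s\<close> into by auto
    then show "\<phi> (\<phi> r) < \<phi> (\<phi> s)"
      using monotone_onD[OF anti] by auto
  qed
qed fact+

lemma homeomorphism_Un_disjoint:
  fixes hL hU :: "'a::t2_space \<Rightarrow> 'b::t2_space"
  assumes "compact L" "compact U" "L \<inter> U = {}" "L' \<inter> U' = {}"
    and hL: "homeomorphism L L' hL kL" and hU: "homeomorphism U U' hU kU"
  obtains k where "homeomorphism (L \<union> U) (L' \<union> U') (\<lambda>x. if x \<in> U then hU x else hL x) k"
proof -
  let ?h = "\<lambda>x. if x \<in> U then hU x else hL x"
  have onL: "?h x = hL x" if "x \<in> L" for x
    using that assms(3) by auto
  have cont: "continuous_on (L \<union> U) ?h"
  proof (rule continuous_on_closed_Un)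
    show "continuous_on L ?h"
      using homeomorphism_cont1[OF hL] onL continuous_on_cong by fastforce
    show "continuous_on U ?h"
      using homeomorphism_cont1[OF hU] continuous_on_cong by fastforce
  qed (use assms(1,2) compact_imp_closed in auto)
  have imgL: "?h ` L = L'" and imgU: "?h ` U = U'"
    using onL homeomorphism_image1[OF hL] homeomorphism_image1[OF hU] by simp_all
  have "inj_on ?h L"
  proof (rule inj_onI)
    fix x y assume "x \<in> L" "y \<in> L" "?h x = ?h y"
    then show "x = y"
      using onL homeomorphism_apply1[OF hL] by metis
  qed
  moreover have "inj_on ?h U"
  proof (rule inj_onI)
    fix x y assume "x \<in> U" "y \<in> U" "?h x = ?h y"
    then show "x = y"
      using homeomorphism_apply1[OF hU] by metis
  qed
  moreover have "?h ` (L - U) \<inter> ?h ` (U - L) = {}"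
    using imgL imgU assms(3,4) by (simp add: Diff_triv Int_commute)
  ultimately have "inj_on ?h (L \<union> U)"
    unfolding inj_on_Un by blast
  moreover have "?h ` (L \<union> U) = L' \<union> U'"
    using imgL imgU by (simp only: image_Un)
  ultimately show thesis
    using homeomorphism_compact[OF compact_Un[OF assms(1,2)] cont] that by blast
qed

lemma conjugacy_from_conjugacy_of_squares:
  fixes f :: "'a::t2_space \<Rightarrow> 'a" and g :: "'b::t2_space \<Rightarrow> 'b"
  assumes "compact U" "L \<inter> U = {}" "L' \<inter> U' = {}"
    and f: "homeomorphism U L f \<psi>" and fL: "f ` L \<subseteq> U"
    and g: "homeomorphism U' L' g \<gamma>"
    and h1: "homeomorphism U U' h1 k1" and conj: "\<And>x. x \<in> U \<Longrightarrow> h1 (f (f x)) = g (g (h1 x))"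
  shows "\<exists>h h'. homeomorphism (L \<union> U) (L' \<union> U') h h' \<and> (\<forall>x \<in> L \<union> U. g (h x) = h (f x))"
proof -
  have hL: "homeomorphism L L' (g \<circ> (h1 \<circ> \<psi>)) ((f \<circ> k1) \<circ> \<gamma>)"
    using homeomorphism_compose[OF homeomorphism_compose[OF homeomorphism_symD[OF f] h1] g] .
  have "compact L"
    using compact_continuous_image[OF homeomorphism_cont1[OF f] \<open>compact U\<close>] homeomorphism_image1[OF f]
    by simp
  obtain k where hom: "homeomorphism (L \<union> U) (L' \<union> U')
      (\<lambda>x. if x \<in> U then h1 x else g (h1 (\<psi> x))) k"
    using homeomorphism_Un_disjoint[OF \<open>compact L\<close> \<open>compact U\<close> assms(2,3) hL h1]
    unfolding comp_def .
  have "g (if x \<in> U then h1 x else g (h1 (\<psi> x))) = (if f x \<in> U then h1 (f x) else g (h1 (\<psi> (f x))))"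
    if "x \<in> L \<union> U" for x
  proof (cases "x \<in> U")
    case True
    then have "f x \<in> L" "\<psi> (f x) = x"
      using homeomorphism_image1[OF f] homeomorphism_apply1[OF f] by auto
    then show ?thesis
      using True assms(2) by auto
  next
    case False
    then have x: "x \<in> L" "\<psi> x \<in> U" "f (\<psi> x) = x"
      using that homeomorphism_apply2[OF f] homeomorphism_image2[OF f] by auto
    then have "f x \<in> U"
      using fL by blast
    then show ?thesis
      using False x conj[of "\<psi> x"] by auto
  qed
  with hom show ?thesis
    by blast
qed

lemma decr_self_homeo_outer_piece:
  fixes f :: "real \<Rightarrow> real"
  assumes hom: "decr_self_homeo {f a..a} f" and c: "c \<in> {f a..a}" "c < a" "f (f c) = c"
    and below: "\<And>x. x \<in> {c<..a} \<Longrightarrow> f (f x) < x"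
  obtains \<psi> where "homeomorphism {c..a} {f a..f c} f \<psi>" "f ` {f a..f c} \<subseteq> {c..a}"
    "descending_orbits (\<lambda>x. f (f x)) c a"
proof -
  obtain \<psi> where homeo: "homeomorphism {f a..a} (f ` {f a..a}) f \<psi>"
    and into: "f ` {f a..a} \<subseteq> {f a..a}" and anti: "strict_antimono_on {f a..a} f"
    using hom by (rule decr_self_homeoE)
  have sub: "{c..a} \<subseteq> {f a..a}"
    using c by auto
  have square: "descending_orbits (\<lambda>x. f (f x)) c a"
    using descending_orbits_square[OF homeomorphism_cont1[OF homeo] into anti sub c(2,3) below] .
  have "antimono_on {c..a} f"
    using anti sub strict_antimono_iff_antimono monotone_on_subset by blast
  then have swap: "f ` {c..a} = {f a..f c}"
    using continuous_antimono_on_image_Icc continuous_on_subset[OF homeomorphism_cont1[OF homeo] sub]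
      c(2) by simp
  then have "homeomorphism {c..a} {f a..f c} f \<psi>"
    by (rule homeomorphism_of_subsets[OF homeo sub empty_subsetI])
  moreover have "f ` {f a..f c} \<subseteq> {c..a}"
    using descending_orbits.maps_into[OF square] unfolding swap[symmetric] by auto
  ultimately show thesis
    using that square by blast
qed

theorem theorem5:
  fixes f g :: "real \<Rightarrow> real" and a b xL xR yL yR :: real
  assumes ab: "a > 0" "b > 0"
    and g_hom: "decr_self_homeo {g b..b} g"
    and f_hom: "decr_self_homeo {f a..a} f"
    and g_rep: "repelling_fp {g b..b} g 0"
    and g_orb: "xL < 0" "0 < xR" "g xL = xR" "g xR = xL" "attracting_2orbit {g b..b} g xL xR"
    and b_gt: "b > xR"
    and f_rep: "repelling_fp {f a..a} f 0"
    and f_orb: "yL < 0" "0 < yR" "f yL = yR" "f yR = yL" "attracting_2orbit {f a..a} f yL yR"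
    and a_gt: "a > yR"
    and g2: "\<And>x. x \<in> {xR<..b} \<Longrightarrow> g (g x) < x"
    and f2: "\<And>x. x \<in> {yR<..a} \<Longrightarrow> f (f x) < x"
  shows "\<exists>h h'. homeomorphism ({f a..yL} \<union> {yR..a}) ({g b..xL} \<union> {xR..b}) h h' \<and>
           (\<forall>x \<in> {f a..yL} \<union> {yR..a}. g (h x) = h (f x))"
proof -
  have yR_in: "yR \<in> {f a..a}" and xR_in: "xR \<in> {g b..b}"
    using f_orb(5) g_orb(5) by (simp_all add: attracting_2orbit_def attracting_fp_def)
  obtain \<psi> where "homeomorphism {yR..a} {f a..yL} f \<psi>" "f ` {f a..yL} \<subseteq> {yR..a}"
    and ff: "descending_orbits (\<lambda>x. f (f x)) yR a"
    using decr_self_homeo_outer_piece[OF f_hom yR_in a_gt _ f2] f_orb(3,4) by metis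
  moreover obtain \<gamma> where "homeomorphism {xR..b} {g b..xL} g \<gamma>"
    and gg: "descending_orbits (\<lambda>x. g (g x)) xR b"
    using decr_self_homeo_outer_piece[OF g_hom xR_in b_gt _ g2] g_orb(3,4) by metis
  moreover obtain h1 k1 where "homeomorphism {yR..a} {xR..b} h1 k1"
    "\<And>x. x \<in> {yR..a} \<Longrightarrow> h1 (f (f x)) = g (g (h1 x))"
    using descending_orbits_conjugate[OF ff gg] by blast
  ultimately show ?thesis
    using f_orb(1,2) g_orb(1,2)
    by (intro conjugacy_from_conjugacy_of_squares) (auto simp: homeomorphism_image1)
qed

end
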